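(* Let $G$ be a finite simple undirected graph and $k \ge 1$ an integer. Suppose that $n \geq 3$ and that pairwise distinct $k$-cliques $A_1, \dots, A_n$ of $G$ are pairwise adjacent in $\mathsf{TS}_k(G)$. Then either there exist a clique $U \subseteq V(G)$ of size $k+1$ and pairwise distinct vertices $a_1, \dots, a_n \in U$ with $A_i = U \setminus \{a_i\}$ for all $1 \le i \le n$, or there exist a clique $I \subseteq V(G)$ of size $k-1$ and pairwise distinct vertices $a_1, \dots, a_n \in V(G) \setminus I$ with $A_i = I \cup \{a_i\}$ for all $1 \le i \le n$. In particular, if $n > k+1$, the second alternative holds.
   Context: A $k$-clique is a set of $k$ pairwise adjacent vertices. $\mathsf{TS}_k(G)$ is the graph whose vertices are the $k$-cliques of $G$, two $k$-cliques $C, C'$ being adjacent iff there are vertices $u,v$ with $C \setminus C' = \{u\}$, $C' \setminus C = \{v\}$ and $uv \in E(G)$. *)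

theory Defs
  imports Main
begin

definition simple_graph :: "'a set \<Rightarrow> ('a \<Rightarrow> 'a \<Rightarrow> bool) \<Rightarrow> bool" where
  "simple_graph V E \<longleftrightarrow> finite V \<and> (\<forall>u v. E u v \<longrightarrow> u \<in> V \<and> v \<in> V)
     \<and> (\<forall>u v. E u v \<longrightarrow> E v u) \<and> (\<forall>u. \<not> E u u)"

definition clique :: "'a set \<Rightarrow> ('a \<Rightarrow> 'a \<Rightarrow> bool) \<Rightarrow> 'a set \<Rightarrow> bool" where
  "clique V E C \<longleftrightarrow> C \<subseteq> V \<and> (\<forall>u\<in>C. \<forall>v\<in>C. u \<noteq> v \<longrightarrow> E u v)"

definition k_clique :: "'a set \<Rightarrow> ('a \<Rightarrow> 'a \<Rightarrow> bool) \<Rightarrow> nat \<Rightarrow> 'a set \<Rightarrow> bool" where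
  "k_clique V E k C \<longleftrightarrow> clique V E C \<and> finite C \<and> card C = k"

definition TS_adj :: "'a set \<Rightarrow> ('a \<Rightarrow> 'a \<Rightarrow> bool) \<Rightarrow> nat \<Rightarrow> 'a set \<Rightarrow> 'a set \<Rightarrow> bool" where
  "TS_adj V E k C C' \<longleftrightarrow> k_clique V E k C \<and> k_clique V E k C' \<and>
     (\<exists>u v. C - C' = {u} \<and> C' - C = {v} \<and> E u v)"

end

theory Submission
  imports Defs
begin

text \<open>Two adjacent \<open>k\<close>-cliques \<open>A\<^sub>1, A\<^sub>2\<close> share a core \<open>I = A\<^sub>1 \<inter> A\<^sub>2\<close> of size
\<open>k - 1\<close> and span a clique \<open>U = A\<^sub>1 \<union> A\<^sub>2\<close> of size \<open>k + 1\<close>. A set \<open>C\<close> that is one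
swap away from both \<open>A\<^sub>1\<close> and \<open>A\<^sub>2\<close> (that is, \<open>A\<^sub>i - C\<close> and \<open>C - A\<^sub>i\<close> are
singletons) is either \<open>I \<union> {x}\<close> with \<open>x \<notin> U\<close> or \<open>U - {y}\<close>. Sets \<open>I \<union> {x}\<close> with
\<open>x \<notin> U\<close> and \<open>U - {y}\<close> with \<open>y \<in> I\<close> differ in both vertices of \<open>U - I\<close>, so they
are not one swap apart. Hence either all \<open>A\<^sub>i\<close> have the form \<open>U - {a\<^sub>i}\<close>, which
forces \<open>n \<le> k + 1\<close>, or all have the form \<open>I \<union> {a\<^sub>i}\<close>.\<close>

lemma clique_subset: "clique V E C \<Longrightarrow> D \<subseteq> C \<Longrightarrow> clique V E D"
  unfolding clique_def by blast

lemma clique_Un: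
  assumes "\<And>x y. E x y \<Longrightarrow> E y x" "clique V E A" "clique V E B"
    and "\<forall>x\<in>A - B. \<forall>y\<in>B - A. E x y"
  shows "clique V E (A \<union> B)"
  using assms unfolding clique_def by (metis Diff_iff Un_iff Un_subset_iff)

lemma card_Int_Un_swap:
  assumes "finite A" "A - B = {u}" "B - A = {v}"
  shows "card (A \<inter> B) = card A - 1" "card (A \<union> B) = card A + 1"
proof -
  have "A \<inter> B = A - {u}" "A \<union> B = insert v A" "v \<notin> A" "u \<in> A"
    using assms(2,3) by blast+
  then show "card (A \<inter> B) = card A - 1" "card (A \<union> B) = card A + 1"
    using assms(1) by simp_all
qed

lemma TS_adj_Int_Un_cliques:
  assumes "simple_graph V E" "TS_adj V E k A B"
  shows "clique V E (A \<inter> B)" "finite (A \<inter> B)" "card (A \<inter> B) = k - 1"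
    and "clique V E (A \<union> B)" "finite (A \<union> B)" "card (A \<union> B) = k + 1"
proof -
  obtain u v where uv: "A - B = {u}" "B - A = {v}" "E u v"
    using assms(2) unfolding TS_adj_def by meson
  have A: "clique V E A" "finite A" "card A = k" and B: "clique V E B" "finite B"
    using assms(2) unfolding TS_adj_def k_clique_def by simp_all
  have "\<And>x y. E x y \<Longrightarrow> E y x"
    using assms(1) unfolding simple_graph_def by blast
  moreover have "\<forall>x\<in>A - B. \<forall>y\<in>B - A. E x y"
    using uv by simp
  ultimately show "clique V E (A \<union> B)"
    using clique_Un A(1) B(1) by blast
  show "clique V E (A \<inter> B)"
    using clique_subset[OF A(1)] by blast
  show "finite (A \<inter> B)" "finite (A \<union> B)"
    using A(2) B(2) by simp_all
  show "card (A \<inter> B) = k - 1" "card (A \<union> B) = k + 1"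
    using card_Int_Un_swap[OF A(2) uv(1,2)] A(3) by simp_all
qed

lemma swap_pair_decomp:
  assumes "A - B = {u}" "B - A = {v}"
  shows "A = insert u (A \<inter> B)" "B = insert v (A \<inter> B)"
    and "u \<notin> A \<inter> B" "v \<notin> A \<inter> B" "u \<noteq> v"
  using assms by blast+

lemma swap_neighbour_cases:
  assumes "u \<notin> I" "v \<notin> I" "u \<noteq> v"
    and "insert u I - C = {q}" "C - insert u I = {p}" "insert v I - C = {q'}"
  defines "U \<equiv> insert u (insert v I)"
  shows "(\<exists>x. x \<notin> U \<and> C = insert x I) \<or> (\<exists>y\<in>U. C = U - {y})"
proof (cases "q = u")
  case True
  then have C: "C = insert p I"
    using assms(1,4,5) by fastforce
  show ?thesis
  proof (cases "p = v")
    case True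
    then have "C = U - {u}"
      using C assms(1-3) unfolding U_def by auto
    then show ?thesis
      unfolding U_def by blast
  next
    case False
    then have "p \<notin> U"
      using assms(5) unfolding U_def by fastforce
    then show ?thesis
      using C by blast
  qed
next
  case False
  then have "q \<in> I"
    using assms(4) by blast
  then have "q' = q"
    using assms(4,6) by fastforce
  then have "v \<in> C"
    using assms(2,6) \<open>q \<in> I\<close> by fastforce
  then have "p = v"
    using assms(2,3,5) by fastforce
  moreover have "C = insert p (insert u I - {q})"
    using assms(4,5) by blast
  ultimately have "C = U - {q}"
    using assms(1-3) \<open>q \<in> I\<close> unfolding U_def by auto
  then show ?thesis
    using \<open>q \<in> I\<close> unfolding U_def by blast
qed

lemma swap_neighbour_of_outside_insert:
  fixes I :: "'a set" and u v :: 'a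
  defines "U \<equiv> insert u (insert v I)"
  assumes "u \<notin> I" "v \<notin> I" "u \<noteq> v" "x \<notin> U" "y \<in> U"
    and "(U - {y}) - insert x I = {w}"
  shows "\<exists>z. z \<notin> I \<and> U - {y} = insert z I"
proof -
  have "y \<in> I \<Longrightarrow> {u, v} \<subseteq> (U - {y}) - insert x I"
    using assms(2,3,5) unfolding U_def by auto
  then have "y = u \<or> y = v"
    using assms(4,6,7) unfolding U_def by auto
  then show ?thesis
    using assms(2-4) unfolding U_def by auto
qed

lemma pairwise_swap_family_member_cases:
  assumes swap: "\<forall>i\<in>S. \<forall>j\<in>S. i \<noteq> j \<longrightarrow> (\<exists>q p. F i - F j = {q} \<and> F j - F i = {p})"
    and "i\<^sub>1 \<in> S" "i\<^sub>2 \<in> S" "i\<^sub>1 \<noteq> i\<^sub>2" "i \<in> S"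
  defines "I \<equiv> F i\<^sub>1 \<inter> F i\<^sub>2" and "U \<equiv> F i\<^sub>1 \<union> F i\<^sub>2"
  shows "(\<exists>x. x \<notin> U \<and> F i = insert x I) \<or> (\<exists>y\<in>U. F i = U - {y})"
proof -
  obtain u v where "F i\<^sub>1 - F i\<^sub>2 = {u}" "F i\<^sub>2 - F i\<^sub>1 = {v}"
    using swap assms(2-4) by blast
  note uv = swap_pair_decomp[OF this, folded I_def]
  have U: "U = insert u (insert v I)"
    unfolding U_def using uv(1,2) by blast
  consider "i = i\<^sub>1" | "i = i\<^sub>2" | "i \<noteq> i\<^sub>1" "i \<noteq> i\<^sub>2"
    by blast
  then show ?thesis
  proof cases
    case 1
    then have "F i = U - {v}"
      using uv U by auto
    then show ?thesis
      using U by blast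
  next
    case 2
    then have "F i = U - {u}"
      using uv U by auto
    then show ?thesis
      using U by blast
  next
    case 3
    then obtain q p q' where "F i\<^sub>1 - F i = {q}" "F i - F i\<^sub>1 = {p}" "F i\<^sub>2 - F i = {q'}"
      using swap assms(2,3,5) by metis
    then show ?thesis
      using swap_neighbour_cases[of u I v "F i"] uv U by metis
  qed
qed

lemma pairwise_swap_family_cases:
  assumes swap: "\<forall>i\<in>S. \<forall>j\<in>S. i \<noteq> j \<longrightarrow> (\<exists>q p. F i - F j = {q} \<and> F j - F i = {p})"
    and "i\<^sub>1 \<in> S" "i\<^sub>2 \<in> S" "i\<^sub>1 \<noteq> i\<^sub>2"
  defines "I \<equiv> F i\<^sub>1 \<inter> F i\<^sub>2" and "U \<equiv> F i\<^sub>1 \<union> F i\<^sub>2"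
  shows "(\<forall>i\<in>S. \<exists>y\<in>U. F i = U - {y}) \<or> (\<forall>i\<in>S. \<exists>x. x \<notin> I \<and> F i = insert x I)"
proof (cases "\<forall>i\<in>S. \<exists>y\<in>U. F i = U - {y}")
  case False
  note cases = pairwise_swap_family_member_cases[OF swap assms(2-4), folded I_def U_def]
  obtain u v where "F i\<^sub>1 - F i\<^sub>2 = {u}" "F i\<^sub>2 - F i\<^sub>1 = {v}"
    using swap assms(2-4) by blast
  note uv = swap_pair_decomp[OF this, folded I_def]
  have U: "U = insert u (insert v I)"
    unfolding U_def using uv(1,2) by blast
  obtain j x where j: "j \<in> S" "x \<notin> U" "F j = insert x I"
    using False cases by blast
  have "\<exists>x. x \<notin> I \<and> F i = insert x I" if "i \<in> S" for i
    using cases[OF \<open>i \<in> S\<close>]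
  proof
    assume "\<exists>x. x \<notin> U \<and> F i = insert x I"
    then show ?thesis
      using U by blast
  next
    assume "\<exists>y\<in>U. F i = U - {y}"
    then obtain y where y: "y \<in> U" "F i = U - {y}"
      by blast
    then have "i \<noteq> j"
      using j U by auto
    then obtain w where "F i - F j = {w}"
      using swap \<open>i \<in> S\<close> j(1) by blast
    then have "(U - {y}) - insert x I = {w}"
      using y(2) j(3) by simp
    then show ?thesis
      using swap_neighbour_of_outside_insert[of u I v x y w] uv(3-5) j(2) y unfolding U by simp
  qed
  then show ?thesis
    by blast
qed simp

lemma inj_on_parametrisation:
  assumes "inj_on F S" "\<forall>i\<in>S. \<exists>x. P x \<and> F i = G x"
  obtains a where "inj_on a S" "\<forall>i\<in>S. P (a i) \<and> F i = G (a i)"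
proof -
  obtain a where a: "\<forall>i\<in>S. P (a i) \<and> F i = G (a i)"
    using bchoice[OF assms(2)] by blast
  then have "inj_on a S"
    using assms(1) unfolding inj_on_def by metis
  with a show thesis
    using that by blast
qed

theorem lemma3p1:
  fixes V :: "'a set" and E :: "'a \<Rightarrow> 'a \<Rightarrow> bool" and k n :: nat
    and A :: "nat \<Rightarrow> 'a set"
  assumes G: "simple_graph V E"
    and k: "k \<ge> 1"
    and n: "n \<ge> 3"
    and cliques: "\<forall>i\<in>{1..n}. k_clique V E k (A i)"
    and distinct: "inj_on A {1..n}"
    and adj: "\<forall>i\<in>{1..n}. \<forall>j\<in>{1..n}. i \<noteq> j \<longrightarrow> TS_adj V E k (A i) (A j)"
  shows "((\<exists>U a. clique V E U \<and> finite U \<and> card U = k + 1 \<and> inj_on a {1..n} \<and>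
              (\<forall>i\<in>{1..n}. a i \<in> U \<and> A i = U - {a i}))
          \<or> (\<exists>I a. clique V E I \<and> finite I \<and> card I = k - 1 \<and> inj_on a {1..n} \<and>
              (\<forall>i\<in>{1..n}. a i \<in> V - I \<and> A i = I \<union> {a i})))
       \<and> (n > k + 1 \<longrightarrow>
           (\<exists>I a. clique V E I \<and> finite I \<and> card I = k - 1 \<and> inj_on a {1..n} \<and>
              (\<forall>i\<in>{1..n}. a i \<in> V - I \<and> A i = I \<union> {a i})))"
proof -
  have in_S: "1 \<in> {1..n}" "2 \<in> {1..n}" "(1::nat) \<noteq> 2"
    using n by auto
  have swap: "\<forall>i\<in>{1..n}. \<forall>j\<in>{1..n}. i \<noteq> j \<longrightarrow> (\<exists>q p. A i - A j = {q} \<and> A j - A i = {p})"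
    using adj unfolding TS_adj_def by meson
  have "TS_adj V E k (A 1) (A 2)"
    using adj in_S by blast
  note I_U = TS_adj_Int_Un_cliques[OF G this]
  define I U where "I = A 1 \<inter> A 2" and "U = A 1 \<union> A 2"
  note I = I_U(1-3)[folded I_def] and U = I_U(4-6)[folded U_def]
  from pairwise_swap_family_cases[OF swap in_S, folded I_def U_def] show ?thesis
  proof
    assume "\<forall>i\<in>{1..n}. \<exists>y\<in>U. A i = U - {y}"
    then have "\<forall>i\<in>{1..n}. \<exists>y. y \<in> U \<and> A i = U - {y}"
      by blast
    then obtain a where inj: "inj_on a {1..n}"
      and a: "\<forall>i\<in>{1..n}. a i \<in> U \<and> A i = U - {a i}"
      by (rule inj_on_parametrisation[OF distinct])
    have "n \<le> k + 1"
      using card_inj_on_le[OF inj _ U(2)] a U(3) by auto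
    then show ?thesis
      using U inj a by auto
  next
    assume "\<forall>i\<in>{1..n}. \<exists>x. x \<notin> I \<and> A i = insert x I"
    then obtain a where inj: "inj_on a {1..n}"
      and a: "\<forall>i\<in>{1..n}. a i \<notin> I \<and> A i = insert (a i) I"
      by (rule inj_on_parametrisation[OF distinct])
    have "\<forall>i\<in>{1..n}. a i \<in> V"
      using a cliques unfolding k_clique_def clique_def by blast
    then have "\<exists>I a. clique V E I \<and> finite I \<and> card I = k - 1 \<and> inj_on a {1..n} \<and>
                (\<forall>i\<in>{1..n}. a i \<in> V - I \<and> A i = I \<union> {a i})"
      using I inj a by (intro exI[of _ I] exI[of _ a]) auto
    then show ?thesis
      by blast
  qed
qed

end
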